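(* Let $k,m$ be positive integers, $n=4k$, and let $A\in\mathbb{R}^{m\times n}$ have $2k$-restricted isometry constant $\delta_{2k}\in[\frac{\sqrt{2}}{2},1)$. Let $x\in\mathbb{R}^n$, $\epsilon\ge 0$, $e\in\mathbb{R}^m$ with $\|e\|_2\le\epsilon$, and $y=Ax+e$. For $p\in(0,1)$ let $x^{\star}$ be a solution of $\min_{\gamma\in\mathbb{R}^n}\|\gamma\|_p$ subject to $\|y-A\gamma\|_2\le\epsilon$, and let $T_0^c=\{k+1,\dots,n\}$. Let $$\bar C(p)=(1+\delta_{2k})2^{\frac p2-1}\Big(\frac{g(p)}{1-\delta_{2k}}\Big)^{p/2}.$$ Then for each $p\in(0,1)$ with $\bar C(p)<1$, $$\|x-x^{\star}\|_p^p\le \bar C_0\|x_{T_0^c}\|_p^p+\bar C_1k^{1-\frac p2}\epsilon^p,\qquad \bar C_0=\frac{2(1+\bar C(p))}{1-\bar C(p)},\quad \bar C_1=\frac{2^{p+2}}{(1-\delta_{2k})^{\frac p2}(1-\bar C(p))}.$$ In particular, if $\epsilon=0$ and $x$ is $k$-sparse, then $x^{\star}=x$.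
   Context: For $1\le s\le n$, the $s$-restricted isometry constant $\delta_s$ of $A$ is the smallest constant such that $(1-\delta_s)\|z\|_2^2\le\|Az\|_2^2\le(1+\delta_s)\|z\|_2^2$ for all $s$-sparse $z\in\mathbb{R}^n$. For $p\in(0,1)$, $\|\gamma\|_p=(\sum_i|\gamma_i|^p)^{1/p}$. For a vector $v$ and index set $T$, $v_T$ is the vector equal to $v$ on $T$ and zero elsewhere. $g(p)=\frac{p}{2}(1-\frac{p}{2})^{\frac{2}{p}-1}$. *)

theory Defs
  imports Complex_Main
begin

text \<open>Vectors in R^n are functions nat => real (only indices < n matter);
  an m x n matrix is a function nat => nat => real (indices i < m, j < n).\<close>

definition matvec :: "(nat \<Rightarrow> nat \<Rightarrow> real) \<Rightarrow> nat \<Rightarrow> (nat \<Rightarrow> real) \<Rightarrow> nat \<Rightarrow> real" where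
  "matvec A n z = (\<lambda>i. \<Sum>j<n. A i j * z j)"

definition norm2 :: "nat \<Rightarrow> (nat \<Rightarrow> real) \<Rightarrow> real" where
  "norm2 d v = sqrt (\<Sum>i<d. (v i)\<^sup>2)"

definition pnorm :: "real \<Rightarrow> nat \<Rightarrow> (nat \<Rightarrow> real) \<Rightarrow> real" where
  "pnorm p d v = (\<Sum>i<d. \<bar>v i\<bar> powr p) powr (1 / p)"

definition sparse :: "nat \<Rightarrow> nat \<Rightarrow> (nat \<Rightarrow> real) \<Rightarrow> bool" where
  "sparse s n z \<longleftrightarrow> card {j\<in>{..<n}. z j \<noteq> 0} \<le> s"

definition ric :: "(nat \<Rightarrow> nat \<Rightarrow> real) \<Rightarrow> nat \<Rightarrow> nat \<Rightarrow> nat \<Rightarrow> real" where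
  "ric A m n s = Inf {\<delta>. \<forall>z. sparse s n z \<longrightarrow>
      (1 - \<delta>) * (norm2 n z)\<^sup>2 \<le> (norm2 m (matvec A n z))\<^sup>2 \<and>
      (norm2 m (matvec A n z))\<^sup>2 \<le> (1 + \<delta>) * (norm2 n z)\<^sup>2}"

definition gfun :: "real \<Rightarrow> real" where
  "gfun p = p / 2 * (1 - p / 2) powr (2 / p - 1)"

definition Cbar :: "real \<Rightarrow> real \<Rightarrow> real" where
  "Cbar \<delta> p = (1 + \<delta>) * 2 powr (p / 2 - 1) * (gfun p / (1 - \<delta>)) powr (p / 2)"

end

theory Submission
  imports Defs "HOL-Analysis.Convex" "HOL-Analysis.L2_Norm"
begin

text \<open>
  Let \<open>h = xs - x\<close>. Feasibility of both vectors gives \<open>\<parallel>Ah\<parallel>\<^sub>2 \<le> 2\<epsilon>\<close>, and minimality of \<open>xs\<close>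
  gives the cone condition: the \<open>p\<close>-mass of \<open>h\<close> off a \<open>k\<close>-set \<open>T0\<close> is at most its mass on \<open>T0\<close>
  plus twice the mass of \<open>x\<close> off \<open>T0\<close>. Split the complement of \<open>T0\<close> into the set \<open>T1\<close> of the
  \<open>k\<close> largest entries of \<open>|h|\<close> and the remaining \<open>2k\<close> indices \<open>R\<close>. The RIP for the \<open>2k\<close>-sparse
  pieces of \<open>h\<close> on \<open>T0 \<union> T1\<close> and on \<open>R\<close> bounds the squared \<open>\<ell>\<^sub>2\<close>-mass of \<open>h\<close> on \<open>T0 \<union> T1\<close>
  by \<open>(2\<epsilon> + \<surd>(1 + \<delta>) \<parallel>h\<^sub>R\<parallel>\<^sub>2)\<^sup>2 / (1 - \<delta>)\<close>. As every entry on \<open>R\<close> is dominated by every entry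
  on \<open>T1\<close>, \<open>\<parallel>h\<^sub>R\<parallel>\<^sub>2\<^sup>2\<close> is at most \<open>v\<^sup>2\<^sup>/\<^sup>p\<^sup>-\<^sup>1\<close> times the \<open>p\<close>-mass of \<open>h\<close> on \<open>R\<close>, where \<open>v\<close> is
  the mean of \<open>|h|\<^sup>p\<close> over \<open>T1\<close>; the power-mean inequality bounds the \<open>\<ell>\<^sub>2\<close>-mass on \<open>T1\<close> below
  by \<open>k v\<^sup>2\<^sup>/\<^sup>p\<close>. Maximising \<open>v\<^sup>2\<^sup>/\<^sup>p\<^sup>-\<^sup>1 (L - v)\<close> over \<open>v\<close> brings in \<open>g(p)\<close>, and the result is a
  bound of the \<open>p\<close>-mass of \<open>h\<close> on \<open>T0\<close> by \<open>Cbar \<delta> p\<close> times its mass off \<open>T0\<close> plus an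
  \<open>O(k\<^sup>1\<^sup>-\<^sup>p\<^sup>/\<^sup>2 \<epsilon>\<^sup>p)\<close> term. Since \<open>Cbar \<delta> p < 1\<close>, combining this with the cone condition bounds
  the whole \<open>p\<close>-mass of \<open>h\<close>.
\<close>

lemma powr_add_le_add_powr:
  fixes a b p :: real
  assumes "0 \<le> a" "0 \<le> b" "0 < p" "p \<le> 1"
  shows "(a + b) powr p \<le> a powr p + b powr p"
proof (cases "a + b = 0")
  case True
  then show ?thesis using assms by simp
next
  case False
  then have ab: "0 < a + b" using assms by simp
  have le: "u * (a + b) powr (p - 1) \<le> u powr p" if "0 \<le> u" "u \<le> a + b" for u
  proof (cases "u = 0")
    case False
    then have "(a + b) powr (p - 1) \<le> u powr (p - 1)"
      using assms that by (intro powr_mono2') auto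
    then have "u * (a + b) powr (p - 1) \<le> u * u powr (p - 1)"
      using that by (intro mult_left_mono) auto
    also have "\<dots> = u powr p"
      using that False powr_mult_base[of u "p - 1"] by simp
    finally show ?thesis .
  qed simp
  have "(a + b) powr p = a * (a + b) powr (p - 1) + b * (a + b) powr (p - 1)"
    using ab powr_mult_base[of "a + b" "p - 1"] by (simp add: algebra_simps)
  also have "\<dots> \<le> a powr p + b powr p"
    using le[of a] le[of b] assms by (intro add_mono) auto
  finally show ?thesis .
qed

lemma abs_add_powr_le:
  fixes a b p :: real
  assumes "0 < p" "p \<le> 1"
  shows "\<bar>a + b\<bar> powr p \<le> \<bar>a\<bar> powr p + \<bar>b\<bar> powr p"
proof -
  have "\<bar>a + b\<bar> powr p \<le> (\<bar>a\<bar> + \<bar>b\<bar>) powr p"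
    using assms by (intro powr_mono2) auto
  also have "\<dots> \<le> \<bar>a\<bar> powr p + \<bar>b\<bar> powr p"
    using assms by (intro powr_add_le_add_powr) auto
  finally show ?thesis .
qed

text \<open>The maximum of \<open>v\<^sup>q\<^sup>-\<^sup>1 (L - v)\<close> is attained at \<open>v = (1 - 1/q) L\<close>.\<close>
lemma powr_mult_diff_le:
  fixes v L q :: real
  assumes "0 \<le> v" "0 \<le> L" "1 < q"
  shows "v powr (q - 1) * (L - v) \<le> 1 / q * (1 - 1 / q) powr (q - 1) * L powr q"
proof (cases "v = 0 \<or> L \<le> v")
  case True
  then show ?thesis
    using assms by (auto intro: order_trans[OF mult_nonneg_nonpos])
next
  case False
  then have v: "0 < v" "v < L" using assms by auto
  define a where "a = v / (q - 1)"
  have a: "0 < a" using v assms unfolding a_def by simp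
  have "a powr ((q - 1) / q) * (L - v) powr (1 / q) \<le> (q - 1) / q * a + 1 / q * (L - v)"
    using assms a v by (intro Youngs_inequality_0) (auto simp: field_simps)
  also have "\<dots> = L / q"
    using assms unfolding a_def by (simp add: field_simps)
  finally have "(a powr ((q - 1) / q) * (L - v) powr (1 / q)) powr q \<le> (L / q) powr q"
    using assms by (intro powr_mono2) auto
  then have young: "a powr (q - 1) * (L - v) \<le> (L / q) powr q"
    using assms a v by (simp add: powr_mult powr_powr)
  have "v powr (q - 1) * (L - v) = (q - 1) powr (q - 1) * (a powr (q - 1) * (L - v))"
    using assms unfolding a_def by (simp add: powr_divide)
  also have "\<dots> \<le> (q - 1) powr (q - 1) * (L / q) powr q"
    using young by (intro mult_left_mono) auto
  also have "\<dots> = 1 / q * (1 - 1 / q) powr (q - 1) * L powr q"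
  proof -
    have "(1 - 1 / q) powr (q - 1) = (q - 1) powr (q - 1) / q powr (q - 1)"
    proof -
      have "1 - 1 / q = (q - 1) / q" using assms by (simp add: field_simps)
      then show ?thesis using assms by (simp add: powr_divide)
    qed
    moreover have "q powr q = q * q powr (q - 1)"
      using assms powr_mult_base[of q "q - 1"] by simp
    ultimately show ?thesis by (simp add: powr_divide field_simps)
  qed
  finally show ?thesis .
qed

lemma powr_mult_diff_le_gfun:
  fixes v L p :: real
  assumes "0 \<le> v" "0 \<le> L" "0 < p" "p < 2"
  shows "v powr (2 / p - 1) * (L - v) \<le> gfun p * L powr (2 / p)"
proof -
  have "v powr (2 / p - 1) * (L - v)
      \<le> 1 / (2 / p) * (1 - 1 / (2 / p)) powr (2 / p - 1) * L powr (2 / p)"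
    using assms by (intro powr_mult_diff_le) (auto simp: field_simps)
  also have "1 / (2 / p) * (1 - 1 / (2 / p)) powr (2 / p - 1) = gfun p"
    unfolding gfun_def by simp
  finally show ?thesis .
qed

lemma power2_powr_half:
  fixes y p :: real
  assumes "0 \<le> y"
  shows "(y\<^sup>2) powr (p / 2) = y powr p"
  using assms by (simp add: powr_powr flip: powr_numeral)

lemma powr_half_le_add_powr:
  fixes X a b p :: real
  assumes "0 \<le> X" "X \<le> (a + b)\<^sup>2" "0 \<le> a" "0 \<le> b" "0 < p" "p \<le> 1"
  shows "X powr (p / 2) \<le> a powr p + b powr p"
proof -
  have "X powr (p / 2) \<le> ((a + b)\<^sup>2) powr (p / 2)"
    using assms by (intro powr_mono2) auto
  also have "\<dots> = (a + b) powr p"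
    using assms by (simp add: power2_powr_half)
  also have "\<dots> \<le> a powr p + b powr p"
    using assms by (intro powr_add_le_add_powr)
  finally show ?thesis .
qed

lemma add_sqrt_power2_diff_le:
  fixes a b w Z K :: real
  assumes "0 \<le> a" "0 \<le> w" "0 \<le> Z" "1 \<le> K" "a - b \<le> Z\<^sup>2" "a \<le> (K * Z)\<^sup>2"
  shows "(w + sqrt a)\<^sup>2 - b \<le> (Z + K * w)\<^sup>2"
proof -
  have "sqrt a \<le> K * Z"
    using assms real_sqrt_le_mono[of a "(K * Z)\<^sup>2"] by simp
  then have "w * sqrt a \<le> w * (K * Z)"
    using assms by (intro mult_left_mono)
  moreover have "w\<^sup>2 \<le> (K * w)\<^sup>2"
    using assms by (intro power_mono) (auto intro: mult_right_mono[of 1 K w, simplified])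
  ultimately have "(a - b) + 2 * (w * sqrt a) + w\<^sup>2 \<le> Z\<^sup>2 + 2 * (w * (K * Z)) + (K * w)\<^sup>2"
    using assms by linarith
  then show ?thesis
    using assms by (simp add: power2_eq_square algebra_simps)
qed

lemma sum_abs_powr_le_card_powr_mult:
  fixes f :: "'a \<Rightarrow> real"
  assumes "0 < p" "p \<le> 2"
  shows "(\<Sum>i\<in>I. \<bar>f i\<bar> powr p) \<le> real (card I) powr (1 - p / 2) * (\<Sum>i\<in>I. (f i)\<^sup>2) powr (p / 2)"
proof (cases "finite I \<and> (\<Sum>i\<in>I. (f i)\<^sup>2) \<noteq> 0")
  case False
  then have "(\<Sum>i\<in>I. \<bar>f i\<bar> powr p) = 0"
    by (auto simp: sum_nonneg_eq_0_iff)
  then show ?thesis by simp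
next
  case True
  define S where "S = (\<Sum>i\<in>I. (f i)\<^sup>2)"
  define k where "k = real (card I)"
  have S: "0 < S" using True unfolding S_def by (simp add: order_le_neq_trans sum_nonneg)
  then have k: "0 < k" using True unfolding S_def k_def by (auto simp: card_gt_0_iff)
  have young: "(k / S) powr (p / 2) * \<bar>f i\<bar> powr p \<le> p / 2 * (k / S) * (f i)\<^sup>2 + (1 - p / 2)" for i
  proof (cases "f i = 0")
    case False
    have "(k / S * (f i)\<^sup>2) powr (p / 2) * 1 powr (1 - p / 2) \<le> p / 2 * (k / S * (f i)\<^sup>2) + (1 - p / 2) * 1"
      using assms k S False by (intro Youngs_inequality_0) auto
    moreover have "(k / S * (f i)\<^sup>2) powr (p / 2) = (k / S) powr (p / 2) * \<bar>f i\<bar> powr p"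
      using k S power2_powr_half[of "\<bar>f i\<bar>" p] powr_mult[of "k / S" "(f i)\<^sup>2" "p / 2"] by simp
    ultimately show ?thesis by (simp add: mult.assoc)
  qed (use assms in simp)
  have "(k / S) powr (p / 2) * (\<Sum>i\<in>I. \<bar>f i\<bar> powr p) \<le> (\<Sum>i\<in>I. p / 2 * (k / S) * (f i)\<^sup>2 + (1 - p / 2))"
    unfolding sum_distrib_left by (intro sum_mono young)
  also have "\<dots> = p / 2 * (k / S) * S + (1 - p / 2) * k"
    unfolding sum.distrib sum_distrib_left[symmetric] S_def k_def by simp
  also have "\<dots> = k"
    using S by (simp add: field_simps)
  finally have "(\<Sum>i\<in>I. \<bar>f i\<bar> powr p) \<le> k / (k / S) powr (p / 2)"
    using k S by (simp add: pos_le_divide_eq mult.commute)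
  also have "\<dots> = k powr (1 - p / 2) * S powr (p / 2)"
    using k S by (simp add: powr_diff powr_divide)
  finally show ?thesis unfolding k_def S_def .
qed

lemma card_mult_mean_powr_le_sum_power2:
  fixes f :: "'a \<Rightarrow> real"
  assumes "0 < p" "p \<le> 2"
  shows "real (card I) * ((\<Sum>i\<in>I. \<bar>f i\<bar> powr p) / card I) powr (2 / p) \<le> (\<Sum>i\<in>I. (f i)\<^sup>2)"
proof (cases "card I = 0")
  case False
  define S where "S = (\<Sum>i\<in>I. (f i)\<^sup>2)"
  define k where "k = real (card I)"
  have k: "0 < k" and S: "0 \<le> S" using False unfolding k_def S_def by (auto simp: sum_nonneg)
  have "(\<Sum>i\<in>I. \<bar>f i\<bar> powr p) / k \<le> k powr (1 - p / 2) * S powr (p / 2) / k"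
    using sum_abs_powr_le_card_powr_mult[OF assms, of f I] k unfolding k_def S_def
    by (simp add: divide_right_mono)
  also have "\<dots> = (S / k) powr (p / 2)"
    using k S by (simp add: powr_diff powr_divide)
  finally have "((\<Sum>i\<in>I. \<bar>f i\<bar> powr p) / k) powr (2 / p) \<le> ((S / k) powr (p / 2)) powr (2 / p)"
    using assms k by (intro powr_mono2) (auto simp: sum_nonneg)
  also have "\<dots> = S / k"
    using assms k S by (simp add: powr_powr)
  finally show ?thesis
    using k unfolding k_def S_def by (simp add: field_simps)
qed (simp add: sum_nonneg)

lemma sum_power2_le_mean_powr_mult:
  fixes f :: "'a \<Rightarrow> real"
  assumes "finite T" "T \<noteq> {}" "0 < p" "p \<le> 2"
    and dominated: "\<forall>i\<in>T. \<forall>j\<in>R. \<bar>f j\<bar> \<le> \<bar>f i\<bar>"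
  shows "(\<Sum>j\<in>R. (f j)\<^sup>2) \<le> ((\<Sum>i\<in>T. \<bar>f i\<bar> powr p) / card T) powr (2 / p - 1) * (\<Sum>j\<in>R. \<bar>f j\<bar> powr p)"
proof -
  define \<mu> where "\<mu> = Min ((\<lambda>i. \<bar>f i\<bar>) ` T)"
  have \<mu>_le: "\<mu> \<le> \<bar>f i\<bar>" if "i \<in> T" for i
    using assms that unfolding \<mu>_def by auto
  have "\<mu> \<in> (\<lambda>i. \<bar>f i\<bar>) ` T"
    using assms unfolding \<mu>_def by (intro Min_in) auto
  then have \<mu>: "0 \<le> \<mu>" and ge_\<mu>: "\<And>j. j \<in> R \<Longrightarrow> \<bar>f j\<bar> \<le> \<mu>"
    using dominated by auto
  have "real (card T) * \<mu> powr p \<le> (\<Sum>i\<in>T. \<bar>f i\<bar> powr p)"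
    using sum_mono[of T "\<lambda>_. \<mu> powr p" "\<lambda>i. \<bar>f i\<bar> powr p"] \<mu>_le \<mu> assms by (simp add: powr_mono2)
  then have "\<mu> powr p \<le> (\<Sum>i\<in>T. \<bar>f i\<bar> powr p) / card T"
    using assms by (simp add: pos_le_divide_eq card_gt_0_iff mult.commute)
  then have "(\<mu> powr p) powr (2 / p - 1) \<le> ((\<Sum>i\<in>T. \<bar>f i\<bar> powr p) / card T) powr (2 / p - 1)"
    using assms by (intro powr_mono2) (auto simp: field_simps)
  moreover have "(\<mu> powr p) powr (2 / p - 1) = \<mu> powr (2 - p)"
    using assms by (simp add: powr_powr algebra_simps)
  ultimately have \<mu>_mean: "\<mu> powr (2 - p) \<le> ((\<Sum>i\<in>T. \<bar>f i\<bar> powr p) / card T) powr (2 / p - 1)"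
    by simp
  have "(f j)\<^sup>2 \<le> \<mu> powr (2 - p) * \<bar>f j\<bar> powr p" if "j \<in> R" for j
  proof -
    have "(f j)\<^sup>2 = \<bar>f j\<bar> powr 2"
      by (simp add: powr_numeral)
    also have "\<dots> = \<bar>f j\<bar> powr (2 - p) * \<bar>f j\<bar> powr p"
      by (simp flip: powr_add)
    also have "\<dots> \<le> \<mu> powr (2 - p) * \<bar>f j\<bar> powr p"
      using assms ge_\<mu>[OF that] by (intro mult_right_mono powr_mono2) auto
    finally show ?thesis .
  qed
  then have "(\<Sum>j\<in>R. (f j)\<^sup>2) \<le> \<mu> powr (2 - p) * (\<Sum>j\<in>R. \<bar>f j\<bar> powr p)"
    unfolding sum_distrib_left by (intro sum_mono)
  also have "\<dots> \<le> ((\<Sum>i\<in>T. \<bar>f i\<bar> powr p) / card T) powr (2 / p - 1) * (\<Sum>j\<in>R. \<bar>f j\<bar> powr p)"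
    using \<mu>_mean by (intro mult_right_mono) (auto simp: sum_nonneg)
  finally show ?thesis .
qed

lemma gfun_energy_bounds:
  fixes c d p k v Q r s :: real
  assumes "1 \<le> c" "c + d = 2" "0 \<le> d" "0 < p" "p < 1" "0 < k" "0 \<le> v" "0 \<le> Q"
    and tail: "r \<le> v powr (2 / p - 1) * Q"
    and head: "k * v powr (2 / p) \<le> s"
  defines "L \<equiv> c * (v + Q / k) / 2"
  shows "c * r - d * s \<le> 2 * k * gfun p * L powr (2 / p)"
    and "c * r \<le> 2 powr (2 / p) * (2 * k * gfun p * L powr (2 / p))"
proof -
  have g: "0 \<le> gfun p" using assms unfolding gfun_def by simp
  have q: "1 < 2 / p" using assms by (simp add: field_simps)
  have cr: "c * r \<le> c * v powr (2 / p - 1) * Q"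
    using tail assms by (simp add: mult.assoc)
  have "k * v powr (2 / p - 1) * v \<le> s"
    using head powr_mult_base[of v "2 / p - 1"] assms by (simp add: ac_simps)
  then have "d * (k * v powr (2 / p - 1) * v) \<le> d * s"
    using assms by (intro mult_left_mono)
  then have "c * r - d * s \<le> c * v powr (2 / p - 1) * Q - d * (k * v powr (2 / p - 1) * v)"
    using cr by linarith
  also have "\<dots> = 2 * k * (v powr (2 / p - 1) * (L - v))"
  proof -
    have d: "d = 2 - c" using assms by simp
    show ?thesis using \<open>0 < k\<close> unfolding L_def d by (simp add: field_simps)
  qed
  also have "\<dots> \<le> 2 * k * (gfun p * L powr (2 / p))"
    using assms by (intro mult_left_mono powr_mult_diff_le_gfun) (auto simp: L_def)
  finally show "c * r - d * s \<le> 2 * k * gfun p * L powr (2 / p)"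
    by (simp add: mult.assoc)
  have "c * v powr (2 / p - 1) * Q = c * k * (v powr (2 / p - 1) * (v + Q / k - v))"
    using assms by (simp add: field_simps)
  also have "\<dots> \<le> c * k * (gfun p * (v + Q / k) powr (2 / p))"
    using assms by (intro mult_left_mono powr_mult_diff_le_gfun) auto
  also have "\<dots> \<le> c powr (2 / p) * k * (gfun p * (v + Q / k) powr (2 / p))"
    using assms g powr_mono[of 1 "2 / p" c] q by (intro mult_right_mono) auto
  also have "\<dots> \<le> 2 powr (2 / p) * (2 * k * gfun p * L powr (2 / p))"
    using assms g unfolding L_def by (simp add: powr_mult powr_divide)
  finally show "c * r \<le> 2 powr (2 / p) * (2 * k * gfun p * L powr (2 / p))"
    using cr by linarith
qed

text \<open>
  In the application \<open>t\<close>, \<open>s\<close>, \<open>r\<close> are the squared \<open>\<ell>\<^sub>2\<close>-masses of \<open>h\<close> on \<open>T0\<close>, \<open>T1\<close>, \<open>R\<close>,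
  \<open>v\<close> is the mean of \<open>|h|\<^sup>p\<close> over \<open>T1\<close>, \<open>Q\<close> the \<open>p\<close>-mass of \<open>h\<close> on \<open>R\<close>, and \<open>w = 2\<epsilon>\<close>.
\<close>
lemma tube_powr_le:
  fixes \<delta> p k v Q r s t w :: real
  assumes "0 \<le> \<delta>" "\<delta> < 1" "0 < p" "p < 1" "0 < k"
    and "0 \<le> v" "0 \<le> Q" "0 \<le> r" "0 \<le> t" "0 \<le> w"
    and "r \<le> v powr (2 / p - 1) * Q" "k * v powr (2 / p) \<le> s"
    and tube: "(1 - \<delta>) * (t + s) \<le> (w + sqrt ((1 + \<delta>) * r))\<^sup>2"
  shows "((1 - \<delta>) * t) powr (p / 2)
    \<le> (2 * k * gfun p) powr (p / 2) * ((1 + \<delta>) * (v + Q / k) / 2) + 2 * w powr p"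
proof -
  define L where "L = (1 + \<delta>) * (v + Q / k) / 2"
  define Z where "Z = sqrt (2 * k * gfun p * L powr (2 / p))"
  define K :: real where "K = 2 powr (1 / p)"
  have g: "0 \<le> gfun p" using assms unfolding gfun_def by simp
  have Z: "0 \<le> Z" "Z\<^sup>2 = 2 * k * gfun p * L powr (2 / p)"
    using assms g unfolding Z_def by auto
  have K: "1 \<le> K" "K\<^sup>2 = 2 powr (2 / p)" "K powr p = 2"
    using assms unfolding K_def
    by (auto intro: ge_one_powr_ge_zero simp: powr_powr power2_eq_square simp flip: powr_add)
  note energy = gfun_energy_bounds[of "1 + \<delta>" "1 - \<delta>" p k v Q r s, folded L_def]
  have "(1 - \<delta>) * t \<le> (w + sqrt ((1 + \<delta>) * r))\<^sup>2 - (1 - \<delta>) * s"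
    using tube by (simp add: algebra_simps)
  also have "\<dots> \<le> (Z + K * w)\<^sup>2"
    using assms energy Z K by (intro add_sqrt_power2_diff_le) (auto simp: power_mult_distrib)
  finally have "((1 - \<delta>) * t) powr (p / 2) \<le> Z powr p + (K * w) powr p"
    using assms Z K by (intro powr_half_le_add_powr) auto
  also have "(K * w) powr p = 2 * w powr p"
    using assms K by (simp add: powr_mult)
  also have "Z powr p = (2 * k * gfun p) powr (p / 2) * L"
    using assms g Z power2_powr_half[of Z p] by (simp add: powr_mult powr_powr L_def)
  finally show ?thesis unfolding L_def .
qed

lemma Cbar_estimate:
  fixes \<delta> p k v Q r s t w :: real
  assumes "0 \<le> \<delta>" "\<delta> < 1" "0 < p" "p < 1" "0 < k"
    and "0 \<le> v" "0 \<le> Q" "0 \<le> r" "0 \<le> t" "0 \<le> w"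
    and "r \<le> v powr (2 / p - 1) * Q" "k * v powr (2 / p) \<le> s"
    and "(1 - \<delta>) * (t + s) \<le> (w + sqrt ((1 + \<delta>) * r))\<^sup>2"
  shows "k powr (1 - p / 2) * t powr (p / 2)
    \<le> Cbar \<delta> p * (k * v + Q) + 2 * k powr (1 - p / 2) * w powr p / (1 - \<delta>) powr (p / 2)"
proof -
  have g: "0 \<le> gfun p" using assms unfolding gfun_def by simp
  have "(1 - \<delta>) powr (p / 2) * (k powr (1 - p / 2) * t powr (p / 2))
      = k powr (1 - p / 2) * ((1 - \<delta>) * t) powr (p / 2)"
    using assms by (simp add: powr_mult)
  also have "\<dots> \<le> k powr (1 - p / 2)
      * ((2 * k * gfun p) powr (p / 2) * ((1 + \<delta>) * (v + Q / k) / 2) + 2 * w powr p)"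
    using tube_powr_le[OF assms] by (rule mult_left_mono) simp
  also have "\<dots> = (k powr (1 - p / 2) * k powr (p / 2)) * (2 powr (p / 2) / 2)
      * gfun p powr (p / 2) * ((1 + \<delta>) * (v + Q / k)) + 2 * k powr (1 - p / 2) * w powr p"
    using assms g by (simp add: powr_mult algebra_simps)
  also have "k powr (1 - p / 2) * k powr (p / 2) = k"
    using assms by (simp flip: powr_add)
  also have "2 powr (p / 2) / 2 = 2 powr (p / 2 - 1)"
    by (simp add: powr_diff)
  also have "k * 2 powr (p / 2 - 1) * gfun p powr (p / 2) * ((1 + \<delta>) * (v + Q / k))
      = (1 + \<delta>) * 2 powr (p / 2 - 1) * gfun p powr (p / 2) * (k * v + Q)"
    using \<open>0 < k\<close> by (simp add: field_simps)
  finally show ?thesis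
    using assms unfolding Cbar_def by (simp add: powr_divide pos_le_divide_eq field_simps)
qed

lemma exists_subset_of_largest:
  fixes f :: "'a \<Rightarrow> real"
  assumes "finite B" "k \<le> card B"
  shows "\<exists>T\<subseteq>B. card T = k \<and> (\<forall>i\<in>T. \<forall>j\<in>B - T. f j \<le> f i)"
  using assms(2)
proof (induction k)
  case 0
  then show ?case by auto
next
  case (Suc k)
  then obtain T where T: "T \<subseteq> B" "card T = k" "\<forall>i\<in>T. \<forall>j\<in>B - T. f j \<le> f i"
    by auto
  have "finite T" using T(1) assms(1) finite_subset by blast
  have "B - T \<noteq> {}"
    using Suc.prems T(2) card_mono[OF \<open>finite T\<close>, of B] by auto
  then have "Max (f ` (B - T)) \<in> f ` (B - T)"
    using assms(1) by (intro Max_in) auto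
  then obtain j where j: "j \<in> B - T" "f j = Max (f ` (B - T))"
    by auto
  have "f i \<le> f j" if "i \<in> B - T" for i
    using that j(2) assms(1) by simp
  then show ?case
    using T j \<open>finite T\<close> by (intro exI[of _ "insert j T"]) auto
qed

lemma partition_of_largest:
  fixes f :: "'a \<Rightarrow> real"
  assumes "finite B" "k \<le> card B"
  obtains T R where "T \<union> R = B" "T \<inter> R = {}" "card T = k" "card R = card B - k"
    "\<forall>i\<in>T. \<forall>j\<in>R. f j \<le> f i"
proof -
  obtain T where T: "T \<subseteq> B" "card T = k" "\<forall>i\<in>T. \<forall>j\<in>B - T. f j \<le> f i"
    using exists_subset_of_largest[OF assms] by blast
  moreover have "card (B - T) = card B - k"
    using T assms(1) by (simp add: card_Diff_subset finite_subset)
  ultimately show ?thesis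
    using that[of T "B - T"] by auto
qed

lemma sum_abs_powr_cone:
  fixes x y :: "'a \<Rightarrow> real"
  assumes "finite I" "T \<subseteq> I" "0 < p" "p \<le> 1"
    and le: "(\<Sum>i\<in>I. \<bar>y i\<bar> powr p) \<le> (\<Sum>i\<in>I. \<bar>x i\<bar> powr p)"
  shows "(\<Sum>i\<in>I - T. \<bar>y i - x i\<bar> powr p) \<le> (\<Sum>i\<in>T. \<bar>y i - x i\<bar> powr p) + 2 * (\<Sum>i\<in>I - T. \<bar>x i\<bar> powr p)"
proof -
  have split: "(\<Sum>i\<in>I. g i) = (\<Sum>i\<in>T. g i) + (\<Sum>i\<in>I - T. g i)" for g :: "'a \<Rightarrow> real"
    using assms by (simp add: sum.subset_diff)
  have "\<bar>x i\<bar> powr p \<le> \<bar>y i\<bar> powr p + \<bar>y i - x i\<bar> powr p" for i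
    using abs_add_powr_le[OF assms(3,4), of "y i" "x i - y i"] by (simp add: abs_minus_commute)
  then have on_T: "(\<Sum>i\<in>T. \<bar>x i\<bar> powr p) \<le> (\<Sum>i\<in>T. \<bar>y i\<bar> powr p) + (\<Sum>i\<in>T. \<bar>y i - x i\<bar> powr p)"
    by (simp add: sum_mono flip: sum.distrib)
  have "\<bar>y i - x i\<bar> powr p \<le> \<bar>y i\<bar> powr p + \<bar>x i\<bar> powr p" for i
    using abs_add_powr_le[OF assms(3,4), of "y i" "- x i"] by simp
  then have off_T: "(\<Sum>i\<in>I - T. \<bar>y i - x i\<bar> powr p) \<le> (\<Sum>i\<in>I - T. \<bar>y i\<bar> powr p) + (\<Sum>i\<in>I - T. \<bar>x i\<bar> powr p)"
    by (simp add: sum_mono flip: sum.distrib)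
  show ?thesis
    using le on_T off_T split[of "\<lambda>i. \<bar>y i\<bar> powr p"] split[of "\<lambda>i. \<bar>x i\<bar> powr p"] by linarith
qed

lemma head_tail_sum_le:
  fixes H P C E \<eta> :: real
  assumes "H \<le> C * P + E" "P \<le> H + 2 * \<eta>" "0 \<le> C" "C < 1"
  shows "H + P \<le> 2 * (1 + C) / (1 - C) * \<eta> + 2 * E / (1 - C)"
proof -
  have "(1 - C) * P \<le> E + 2 * \<eta>"
    using assms by (simp add: algebra_simps)
  then have "(1 + C) * ((1 - C) * P) \<le> (1 + C) * (E + 2 * \<eta>)"
    using assms by (intro mult_left_mono) auto
  moreover have "(1 - C) * H \<le> (1 - C) * (C * P + E)"
    using assms by (intro mult_left_mono) auto
  ultimately have "(1 - C) * (H + P) \<le> 2 * (1 + C) * \<eta> + 2 * E"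
    by (simp add: algebra_simps)
  then have "H + P \<le> (2 * (1 + C) * \<eta> + 2 * E) / (1 - C)"
    using assms by (simp add: pos_le_divide_eq mult.commute)
  then show ?thesis
    by (simp only: add_divide_distrib times_divide_eq_left)
qed

lemma norm2_nonneg: "0 \<le> norm2 d v"
  unfolding norm2_def by (simp add: sum_nonneg)

lemma norm2_power2: "(norm2 d v)\<^sup>2 = (\<Sum>i<d. (v i)\<^sup>2)"
  unfolding norm2_def by (simp add: sum_nonneg)

lemma norm2_cong: "(\<And>i. i < d \<Longrightarrow> u i = v i) \<Longrightarrow> norm2 d u = norm2 d v"
  unfolding norm2_def by (intro arg_cong[where f = sqrt] sum.cong) auto

lemma norm2_diff_le: "norm2 d (\<lambda>i. u i - v i) \<le> norm2 d u + norm2 d v"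
  using L2_set_triangle_ineq[of u "\<lambda>i. - v i" "{..<d}"] unfolding norm2_def L2_set_def by simp

lemma matvec_diff: "matvec A n (\<lambda>j. u j - v j) i = matvec A n u i - matvec A n v i"
  unfolding matvec_def by (simp add: algebra_simps sum_subtractf)

lemma norm2_matvec_le:
  "(norm2 m (matvec A n z))\<^sup>2 \<le> (\<Sum>i<m. \<Sum>j<n. (A i j)\<^sup>2) * (norm2 n z)\<^sup>2"
proof -
  have "(norm2 m (matvec A n z))\<^sup>2 = (\<Sum>i<m. (\<Sum>j<n. A i j * z j)\<^sup>2)"
    unfolding norm2_power2 matvec_def ..
  also have "\<dots> \<le> (\<Sum>i<m. (\<Sum>j<n. (A i j)\<^sup>2) * (\<Sum>j<n. (z j)\<^sup>2))"
    by (intro sum_mono Cauchy_Schwarz_ineq_sum)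
  finally show ?thesis
    unfolding norm2_power2 by (simp add: sum_distrib_right)
qed

definition restrict_vec :: "nat set \<Rightarrow> (nat \<Rightarrow> real) \<Rightarrow> nat \<Rightarrow> real" where
  "restrict_vec T v = (\<lambda>i. if i \<in> T then v i else 0)"

lemma sparse_restrict_vec:
  assumes "finite T" "card T \<le> s"
  shows "sparse s n (restrict_vec T v)"
proof -
  have "card {j\<in>{..<n}. restrict_vec T v j \<noteq> 0} \<le> card T"
    using assms by (intro card_mono) (auto simp: restrict_vec_def)
  then show ?thesis
    using assms unfolding sparse_def by simp
qed

lemma norm2_restrict_vec:
  assumes "T \<subseteq> {..<n}"
  shows "(norm2 n (restrict_vec T v))\<^sup>2 = (\<Sum>i\<in>T. (v i)\<^sup>2)"
proof -
  have "(norm2 n (restrict_vec T v))\<^sup>2 = (\<Sum>i<n. if i \<in> T then (v i)\<^sup>2 else 0)"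
    unfolding norm2_power2 restrict_vec_def by (intro sum.cong) auto
  also have "\<dots> = (\<Sum>i\<in>{..<n} \<inter> T. (v i)\<^sup>2)"
    by (simp add: sum.inter_restrict)
  finally show ?thesis
    using assms by (simp add: Int_absorb1)
qed

lemma matvec_restrict_vec_split:
  assumes "S \<union> R = {..<n}" "S \<inter> R = {}"
  shows "matvec A n v i = matvec A n (restrict_vec S v) i + matvec A n (restrict_vec R v) i"
  unfolding matvec_def restrict_vec_def sum.distrib[symmetric]
  using assms by (intro sum.cong) auto

definition satisfies_rip :: "(nat \<Rightarrow> nat \<Rightarrow> real) \<Rightarrow> nat \<Rightarrow> nat \<Rightarrow> nat \<Rightarrow> real \<Rightarrow> bool" where
  "satisfies_rip A m n s \<delta> \<longleftrightarrow> (\<forall>z. sparse s n z \<longrightarrow>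
      \<bar>(norm2 m (matvec A n z))\<^sup>2 - (norm2 n z)\<^sup>2\<bar> \<le> \<delta> * (norm2 n z)\<^sup>2)"

lemma ric_eq_Inf_satisfies_rip: "ric A m n s = Inf {\<delta>. satisfies_rip A m n s \<delta>}"
  unfolding ric_def satisfies_rip_def abs_le_iff by (simp add: algebra_simps conj_commute)

text \<open>
  The infimum defining \<open>ric\<close> is attained: the constraints are closed half-lines in \<open>\<delta>\<close>, and
  Cauchy-Schwarz provides the member \<open>1 + \<Sum>\<^sub>i\<^sub>j A\<^sub>i\<^sub>j\<^sup>2\<close>.
\<close>
lemma satisfies_rip_ric: "satisfies_rip A m n s (ric A m n s)"
  unfolding satisfies_rip_def
proof (intro allI impI)
  fix z assume z: "sparse s n z"
  define D where "D = {\<delta>. satisfies_rip A m n s \<delta>}"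
  define M where "M = (norm2 m (matvec A n z))\<^sup>2"
  define N where "N = (norm2 n z)\<^sup>2"
  have in_D: "\<bar>M - N\<bar> \<le> \<delta> * N" if "\<delta> \<in> D" for \<delta>
    using that z unfolding D_def M_def N_def satisfies_rip_def by blast
  define F where "F = (\<Sum>i<m. \<Sum>j<n. (A i j)\<^sup>2)"
  have "\<bar>(norm2 m (matvec A n w))\<^sup>2 - (norm2 n w)\<^sup>2\<bar> \<le> (1 + F) * (norm2 n w)\<^sup>2" for w
  proof -
    have "(norm2 m (matvec A n w))\<^sup>2 \<le> F * (norm2 n w)\<^sup>2"
      unfolding F_def by (rule norm2_matvec_le)
    moreover have "0 \<le> F * (norm2 n w)\<^sup>2"
      unfolding F_def by (simp add: sum_nonneg)
    moreover have "0 \<le> (norm2 n w)\<^sup>2" "0 \<le> (norm2 m (matvec A n w))\<^sup>2"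
      by simp_all
    ultimately show ?thesis
      unfolding abs_le_iff distrib_right mult_1_left by (intro conjI) linarith+
  qed
  then have "1 + F \<in> D"
    unfolding D_def satisfies_rip_def by blast
  then have "D \<noteq> {}" by auto
  have "\<bar>M - N\<bar> \<le> Inf D * N"
  proof (cases "N = 0")
    case True
    then show ?thesis using in_D \<open>D \<noteq> {}\<close> by force
  next
    case False
    then have "0 < N" unfolding N_def by simp
    have "\<bar>M - N\<bar> / N \<le> Inf D"
      using \<open>D \<noteq> {}\<close> in_D \<open>0 < N\<close> by (intro cInf_greatest) (auto simp: pos_divide_le_eq)
    then show ?thesis using \<open>0 < N\<close> by (simp add: pos_divide_le_eq)
  qed
  then show "\<bar>(norm2 m (matvec A n z))\<^sup>2 - (norm2 n z)\<^sup>2\<bar> \<le> ric A m n s * (norm2 n z)\<^sup>2"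
    unfolding ric_eq_Inf_satisfies_rip M_def N_def D_def .
qed

lemma satisfies_rip_split_le:
  assumes rip: "satisfies_rip A m n s \<delta>"
    and part: "S \<union> R = {..<n}" "S \<inter> R = {}"
    and card: "card S \<le> s" "card R \<le> s"
    and Ah: "norm2 m (matvec A n h) \<le> \<eta>"
  shows "(1 - \<delta>) * (\<Sum>i\<in>S. (h i)\<^sup>2) \<le> (\<eta> + sqrt ((1 + \<delta>) * (\<Sum>i\<in>R. (h i)\<^sup>2)))\<^sup>2"
proof -
  have sub: "S \<subseteq> {..<n}" "R \<subseteq> {..<n}" using part(1) by auto
  have rip_on: "\<bar>(norm2 m (matvec A n (restrict_vec T h)))\<^sup>2 - (\<Sum>i\<in>T. (h i)\<^sup>2)\<bar> \<le> \<delta> * (\<Sum>i\<in>T. (h i)\<^sup>2)"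
    if "T \<subseteq> {..<n}" "card T \<le> s" for T
  proof -
    have "sparse s n (restrict_vec T h)"
      using that finite_subset[OF that(1)] by (intro sparse_restrict_vec) auto
    then show ?thesis
      using rip unfolding satisfies_rip_def norm2_restrict_vec[OF that(1), symmetric] by blast
  qed
  have "(norm2 m (matvec A n (restrict_vec R h)))\<^sup>2 \<le> (1 + \<delta>) * (\<Sum>i\<in>R. (h i)\<^sup>2)"
    using rip_on[OF sub(2) card(2)] by (simp add: abs_le_iff algebra_simps)
  then have AR: "norm2 m (matvec A n (restrict_vec R h)) \<le> sqrt ((1 + \<delta>) * (\<Sum>i\<in>R. (h i)\<^sup>2))"
    by (rule real_le_rsqrt)
  have "norm2 m (matvec A n (restrict_vec S h))
      = norm2 m (\<lambda>i. matvec A n h i - matvec A n (restrict_vec R h) i)"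
  proof (intro norm2_cong)
    fix i
    show "matvec A n (restrict_vec S h) i = matvec A n h i - matvec A n (restrict_vec R h) i"
      using matvec_restrict_vec_split[OF part, of A h i] by linarith
  qed
  also have "\<dots> \<le> \<eta> + sqrt ((1 + \<delta>) * (\<Sum>i\<in>R. (h i)\<^sup>2))"
    using norm2_diff_le[of m "matvec A n h" "matvec A n (restrict_vec R h)"] Ah AR by linarith
  finally have AS: "norm2 m (matvec A n (restrict_vec S h)) \<le> \<eta> + sqrt ((1 + \<delta>) * (\<Sum>i\<in>R. (h i)\<^sup>2))" .
  have "(1 - \<delta>) * (\<Sum>i\<in>S. (h i)\<^sup>2) \<le> (norm2 m (matvec A n (restrict_vec S h)))\<^sup>2"
    using rip_on[OF sub(1) card(1)] by (simp add: abs_le_iff algebra_simps)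
  also have "\<dots> \<le> (\<eta> + sqrt ((1 + \<delta>) * (\<Sum>i\<in>R. (h i)\<^sup>2)))\<^sup>2"
    using AS norm2_nonneg by (intro power_mono)
  finally show ?thesis .
qed

lemma head_le_Cbar_tail:
  fixes A :: "nat \<Rightarrow> nat \<Rightarrow> real" and h :: "nat \<Rightarrow> real" and \<delta> p \<eta> :: real
  assumes rip: "satisfies_rip A m n (2 * k) \<delta>" and "0 \<le> \<delta>" "\<delta> < 1" "0 < p" "p < 1"
    and "0 < k" "n = 4 * k" and T0: "T0 \<subseteq> {..<n}" "card T0 = k"
    and Ah: "norm2 m (matvec A n h) \<le> \<eta>" "0 \<le> \<eta>"
  shows "(\<Sum>i\<in>T0. \<bar>h i\<bar> powr p)
    \<le> Cbar \<delta> p * (\<Sum>i\<in>{..<n} - T0. \<bar>h i\<bar> powr p)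
      + 2 * real k powr (1 - p / 2) * \<eta> powr p / (1 - \<delta>) powr (p / 2)"
proof -
  have "finite T0" using T0 finite_subset by blast
  then have "card ({..<n} - T0) = 3 * k"
    using assms by (simp add: card_Diff_subset)
  then obtain T1 R where part: "T1 \<union> R = {..<n} - T0" "T1 \<inter> R = {}" "card T1 = k" "card R = 2 * k"
    and largest: "\<forall>i\<in>T1. \<forall>j\<in>R. \<bar>h j\<bar> \<le> \<bar>h i\<bar>"
    using partition_of_largest[of "{..<n} - T0" k "\<lambda>i. \<bar>h i\<bar>"] by auto
  have fin: "finite T1" "finite R" "T1 \<noteq> {}" "T0 \<inter> T1 = {}"
    using part \<open>0 < k\<close> by (auto intro: finite_subset[of _ "{..<n}"])
  define v where "v = (\<Sum>i\<in>T1. \<bar>h i\<bar> powr p) / k"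
  define Q where "Q = (\<Sum>i\<in>R. \<bar>h i\<bar> powr p)"
  have "T0 \<union> T1 \<union> R = {..<n}" "(T0 \<union> T1) \<inter> R = {}" "card (T0 \<union> T1) = 2 * k"
    using T0 part fin \<open>finite T0\<close> by (auto simp: card_Un_disjoint)
  from satisfies_rip_split_le[OF rip this(1,2)] this(3) part(4) Ah
  have tube: "(1 - \<delta>) * ((\<Sum>i\<in>T0. (h i)\<^sup>2) + (\<Sum>i\<in>T1. (h i)\<^sup>2))
      \<le> (\<eta> + sqrt ((1 + \<delta>) * (\<Sum>i\<in>R. (h i)\<^sup>2)))\<^sup>2"
    using fin \<open>finite T0\<close> by (simp add: sum.union_disjoint)
  have head: "real k * v powr (2 / p) \<le> (\<Sum>i\<in>T1. (h i)\<^sup>2)"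
    using card_mult_mean_powr_le_sum_power2[of p T1 h] assms part unfolding v_def by simp
  have tail: "(\<Sum>i\<in>R. (h i)\<^sup>2) \<le> v powr (2 / p - 1) * Q"
    using sum_power2_le_mean_powr_mult[of T1 p R h] assms part fin largest
    unfolding v_def Q_def by simp
  have "(\<Sum>i\<in>T0. \<bar>h i\<bar> powr p) \<le> real k powr (1 - p / 2) * (\<Sum>i\<in>T0. (h i)\<^sup>2) powr (p / 2)"
    using sum_abs_powr_le_card_powr_mult[of p h T0] assms by simp
  also have "\<dots> \<le> Cbar \<delta> p * (real k * v + Q) + 2 * real k powr (1 - p / 2) * \<eta> powr p / (1 - \<delta>) powr (p / 2)"
    using assms tube head tail by (intro Cbar_estimate) (auto simp: v_def Q_def sum_nonneg)
  also have "real k * v + Q = (\<Sum>i\<in>{..<n} - T0. \<bar>h i\<bar> powr p)"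
    using \<open>0 < k\<close> part fin unfolding v_def Q_def by (simp flip: sum.union_disjoint)
  finally show ?thesis .
qed

lemma sum_abs_powr_error_le:
  fixes A :: "nat \<Rightarrow> nat \<Rightarrow> real" and x xs :: "nat \<Rightarrow> real" and \<delta> p \<eta> :: real
  assumes rip: "satisfies_rip A m n (2 * k) \<delta>" and "0 \<le> \<delta>" "\<delta> < 1" "0 < p" "p < 1"
    and "0 < k" "n = 4 * k" and T0: "T0 \<subseteq> {..<n}" "card T0 = k"
    and tube: "norm2 m (\<lambda>i. matvec A n xs i - matvec A n x i) \<le> \<eta>" "0 \<le> \<eta>"
    and mass_le: "(\<Sum>i<n. \<bar>xs i\<bar> powr p) \<le> (\<Sum>i<n. \<bar>x i\<bar> powr p)"
    and "Cbar \<delta> p < 1"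
  shows "(\<Sum>i<n. \<bar>x i - xs i\<bar> powr p)
    \<le> 2 * (1 + Cbar \<delta> p) / (1 - Cbar \<delta> p) * (\<Sum>i\<in>{..<n} - T0. \<bar>x i\<bar> powr p)
      + 4 * real k powr (1 - p / 2) * \<eta> powr p / ((1 - \<delta>) powr (p / 2) * (1 - Cbar \<delta> p))"
proof -
  define h where "h i = xs i - x i" for i
  define E where "E = 2 * real k powr (1 - p / 2) * \<eta> powr p / (1 - \<delta>) powr (p / 2)"
  have "matvec A n h = (\<lambda>i. matvec A n xs i - matvec A n x i)"
    unfolding h_def by (simp add: fun_eq_iff matvec_diff)
  then have "norm2 m (matvec A n h) \<le> \<eta>"
    using tube by simp
  then have head: "(\<Sum>i\<in>T0. \<bar>h i\<bar> powr p) \<le> Cbar \<delta> p * (\<Sum>i\<in>{..<n} - T0. \<bar>h i\<bar> powr p) + E"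
    unfolding E_def using assms by (intro head_le_Cbar_tail[OF rip]) auto
  have cone: "(\<Sum>i\<in>{..<n} - T0. \<bar>h i\<bar> powr p) \<le> (\<Sum>i\<in>T0. \<bar>h i\<bar> powr p) + 2 * (\<Sum>i\<in>{..<n} - T0. \<bar>x i\<bar> powr p)"
    unfolding h_def using T0(1) mass_le \<open>0 < p\<close> \<open>p < 1\<close> by (intro sum_abs_powr_cone) auto
  have "0 \<le> Cbar \<delta> p"
    using \<open>0 \<le> \<delta>\<close> \<open>\<delta> < 1\<close> \<open>0 < p\<close> \<open>p < 1\<close> unfolding Cbar_def gfun_def by simp
  have "(\<Sum>i<n. \<bar>x i - xs i\<bar> powr p) = (\<Sum>i<n. \<bar>h i\<bar> powr p)"
    unfolding h_def by (simp add: abs_minus_commute)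
  also have "\<dots> = (\<Sum>i\<in>T0. \<bar>h i\<bar> powr p) + (\<Sum>i\<in>{..<n} - T0. \<bar>h i\<bar> powr p)"
    using sum.subset_diff[OF T0(1) finite_lessThan, of "\<lambda>i. \<bar>h i\<bar> powr p"] by linarith
  also have "\<dots> \<le> 2 * (1 + Cbar \<delta> p) / (1 - Cbar \<delta> p) * (\<Sum>i\<in>{..<n} - T0. \<bar>x i\<bar> powr p) + 2 * E / (1 - Cbar \<delta> p)"
    by (rule head_tail_sum_le[OF head cone \<open>0 \<le> Cbar \<delta> p\<close> \<open>Cbar \<delta> p < 1\<close>])
  also have "2 * E / (1 - Cbar \<delta> p) = 4 * real k powr (1 - p / 2) * \<eta> powr p / ((1 - \<delta>) powr (p / 2) * (1 - Cbar \<delta> p))"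
    unfolding E_def by simp
  finally show ?thesis .
qed

lemma pnorm_powr:
  assumes "0 < p"
  shows "pnorm p d v powr p = (\<Sum>i<d. \<bar>v i\<bar> powr p)"
  using assms unfolding pnorm_def by (simp add: powr_powr sum_nonneg)

lemma feasible_matvec_diff_le:
  assumes "\<forall>i<m. y i = matvec A n x i + e i" "norm2 m e \<le> \<epsilon>"
    and "norm2 m (\<lambda>i. y i - matvec A n xs i) \<le> \<epsilon>"
  shows "norm2 m (\<lambda>i. matvec A n xs i - matvec A n x i) \<le> 2 * \<epsilon>"
proof -
  have "norm2 m (\<lambda>i. matvec A n xs i - matvec A n x i) = norm2 m (\<lambda>i. e i - (y i - matvec A n xs i))"
    using assms(1) by (intro norm2_cong) auto
  also have "\<dots> \<le> 2 * \<epsilon>"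
    using norm2_diff_le[of m e "\<lambda>i. y i - matvec A n xs i"] assms(2,3) by linarith
  finally show ?thesis .
qed

lemma sparse_imp_exists_support_superset:
  assumes "sparse k n x" "k \<le> n"
  obtains T where "T \<subseteq> {..<n}" "card T = k" "\<forall>i\<in>{..<n} - T. x i = 0"
proof -
  have "card {i\<in>{..<n}. x i \<noteq> 0} \<le> k" "k \<le> card {..<n}"
    using assms unfolding sparse_def by auto
  then obtain T where "{i\<in>{..<n}. x i \<noteq> 0} \<subseteq> T" "T \<subseteq> {..<n}" "card T = k"
    using exists_subset_between[of "{i\<in>{..<n}. x i \<noteq> 0}" k "{..<n}"] by auto
  then show ?thesis using that by blast
qed

lemma lp_minimizer_error_le:
  fixes A :: "nat \<Rightarrow> nat \<Rightarrow> real" and x e y xs :: "nat \<Rightarrow> real" and \<delta> \<epsilon> p :: real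
  assumes rip: "satisfies_rip A m n (2 * k) \<delta>" and "0 \<le> \<delta>" "\<delta> < 1" "0 < p" "p < 1"
    and "0 < k" "n = 4 * k" and "T0 \<subseteq> {..<n}" "card T0 = k"
    and "0 \<le> \<epsilon>" "norm2 m e \<le> \<epsilon>" "\<forall>i<m. y i = matvec A n x i + e i"
    and "norm2 m (\<lambda>i. y i - matvec A n xs i) \<le> \<epsilon>"
    and minimal: "\<forall>\<gamma>. norm2 m (\<lambda>i. y i - matvec A n \<gamma> i) \<le> \<epsilon> \<longrightarrow> pnorm p n xs \<le> pnorm p n \<gamma>"
    and "Cbar \<delta> p < 1"
  shows "(\<Sum>i<n. \<bar>x i - xs i\<bar> powr p)
    \<le> 2 * (1 + Cbar \<delta> p) / (1 - Cbar \<delta> p) * (\<Sum>i\<in>{..<n} - T0. \<bar>x i\<bar> powr p)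
      + 2 powr (p + 2) / ((1 - \<delta>) powr (p / 2) * (1 - Cbar \<delta> p)) * real k powr (1 - p / 2) * \<epsilon> powr p"
proof -
  have tube: "norm2 m (\<lambda>i. matvec A n xs i - matvec A n x i) \<le> 2 * \<epsilon>"
    using assms by (intro feasible_matvec_diff_le) auto
  have "norm2 m (\<lambda>i. y i - matvec A n x i) = norm2 m e"
    using assms by (intro norm2_cong) auto
  then have "pnorm p n xs powr p \<le> pnorm p n x powr p"
    using minimal assms by (intro powr_mono2) (auto simp: pnorm_def)
  then have cone: "(\<Sum>i<n. \<bar>xs i\<bar> powr p) \<le> (\<Sum>i<n. \<bar>x i\<bar> powr p)"
    using assms by (simp add: pnorm_powr)
  have "(\<Sum>i<n. \<bar>x i - xs i\<bar> powr p)
      \<le> 2 * (1 + Cbar \<delta> p) / (1 - Cbar \<delta> p) * (\<Sum>i\<in>{..<n} - T0. \<bar>x i\<bar> powr p)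
        + 4 * real k powr (1 - p / 2) * (2 * \<epsilon>) powr p / ((1 - \<delta>) powr (p / 2) * (1 - Cbar \<delta> p))"
    using assms tube cone by (intro sum_abs_powr_error_le[OF rip]) auto
  also have "4 * real k powr (1 - p / 2) * (2 * \<epsilon>) powr p / ((1 - \<delta>) powr (p / 2) * (1 - Cbar \<delta> p))
      = 2 powr (p + 2) / ((1 - \<delta>) powr (p / 2) * (1 - Cbar \<delta> p)) * real k powr (1 - p / 2) * \<epsilon> powr p"
    using \<open>0 \<le> \<epsilon>\<close> by (simp add: powr_mult powr_add)
  finally show ?thesis .
qed

theorem theorem3:
  fixes k m n :: nat and A :: "nat \<Rightarrow> nat \<Rightarrow> real"
    and x e y xs :: "nat \<Rightarrow> real" and \<epsilon> p :: real
  assumes "k > 0" and "m > 0" and "n = 4 * k"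
    and "sqrt 2 / 2 \<le> ric A m n (2 * k)" and "ric A m n (2 * k) < 1"
    and "\<epsilon> \<ge> 0" and "norm2 m e \<le> \<epsilon>"
    and "\<forall>i<m. y i = matvec A n x i + e i"
    and "0 < p" and "p < 1"
    and "norm2 m (\<lambda>i. y i - matvec A n xs i) \<le> \<epsilon>"
    and "\<forall>\<gamma>. norm2 m (\<lambda>i. y i - matvec A n \<gamma> i) \<le> \<epsilon> \<longrightarrow> pnorm p n xs \<le> pnorm p n \<gamma>"
    and "Cbar (ric A m n (2 * k)) p < 1"
  shows "(pnorm p n (\<lambda>i. x i - xs i) powr p
           \<le> 2 * (1 + Cbar (ric A m n (2 * k)) p) / (1 - Cbar (ric A m n (2 * k)) p)
               * (\<Sum>i\<in>{k..<n}. \<bar>x i\<bar> powr p)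
             + 2 powr (p + 2) / ((1 - ric A m n (2 * k)) powr (p / 2) * (1 - Cbar (ric A m n (2 * k)) p))
               * real k powr (1 - p / 2) * \<epsilon> powr p)
         \<and> (\<epsilon> = 0 \<and> sparse k n x \<longrightarrow> (\<forall>i<n. xs i = x i))"
proof -
  define \<delta> where "\<delta> = ric A m n (2 * k)"
  have rip: "satisfies_rip A m n (2 * k) \<delta>"
    unfolding \<delta>_def by (rule satisfies_rip_ric)
  have "0 \<le> sqrt 2 / 2" by simp
  then have "0 \<le> \<delta>"
    using assms(4) unfolding \<delta>_def by linarith
  note bound = lp_minimizer_error_le[OF rip this assms(5)[folded \<delta>_def] assms(9,10,1,3) _ _
      assms(6,7,8,11,12) assms(13)[folded \<delta>_def]]
  have error: "pnorm p n (\<lambda>i. x i - xs i) powr p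
      \<le> 2 * (1 + Cbar \<delta> p) / (1 - Cbar \<delta> p) * (\<Sum>i\<in>{k..<n}. \<bar>x i\<bar> powr p)
        + 2 powr (p + 2) / ((1 - \<delta>) powr (p / 2) * (1 - Cbar \<delta> p)) * real k powr (1 - p / 2) * \<epsilon> powr p"
    using bound[of "{..<k}"] assms(3,9) by (simp add: pnorm_powr)
  have exact: "\<forall>i<n. xs i = x i" if "\<epsilon> = 0" and sparse: "sparse k n x"
  proof -
    obtain T0 where T0: "T0 \<subseteq> {..<n}" "card T0 = k" "\<forall>i\<in>{..<n} - T0. x i = 0"
      using sparse_imp_exists_support_superset[OF sparse] assms(3) by auto
    then have "(\<Sum>i<n. \<bar>x i - xs i\<bar> powr p) \<le> 0"
      using bound[OF T0(1,2)] \<open>\<epsilon> = 0\<close> assms(9) by simp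
    then show ?thesis
      using sum_nonneg_eq_0_iff[of "{..<n}" "\<lambda>i. \<bar>x i - xs i\<bar> powr p"] sum_nonneg[of "{..<n}" "\<lambda>i. \<bar>x i - xs i\<bar> powr p"]
      by auto
  qed
  show ?thesis
    using error exact unfolding \<delta>_def by blast
qed

end
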